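(* Let $C^1$ and $C^2$ be two compact sets in $(\mathbb{R}^d,\operatorname{dist})$, generated by systems of balls $\{S_I^1\}_I$ and $\{S_L^2\}_L$ respectively, and fix $r\in(0,\tfrac12)$. Assume: (i) $\tau(C^1,\{S_I^1\}_I)\,\tau(C^2,\{S_L^2\}_L)\ge \frac{1}{(1-2r)^2}$; (ii) $C^1\cap (1-2r)S^2_\emptyset\neq\emptyset$; (iii) $\operatorname{rad}(S^1_\emptyset)\ge r\operatorname{rad}(S^2_\emptyset)$ and $\operatorname{rad}(S^2_\emptyset)\ge r\operatorname{rad}(S^1_\emptyset)$; (iv) $\{S_I^1\}_I$ and $\{S_L^2\}_L$ are both $r$-uniformly dense. Then $C^1\cap C^2\neq\emptyset$.
   Context: $\mathbb{R}^d$ is equipped with a distance $\operatorname{dist}$ induced by a norm; all balls are closed balls for this distance; $\operatorname{rad}(B)$ is the radius of a ball $B$, and for $a>0$, $aB$ is the ball with the same center as $B$ and radius $a\operatorname{rad}(B)$. A word $I$ is a finite sequence of natural numbers, $\ell(I)$ its length, $\emptyset$ the empty word. A system of balls for a compact set $C\subseteq\mathbb{R}^d$ is a family $\{S_I\}_I$ of closed balls indexed by words such that each $S_I$ contains its finitely many children $S_{I,j}$, $1\le j\le k_I$ (no separation assumed), $C=\bigcap_{n\ge0}\bigcup_{\ell(I)=n}S_I$, and for every infinite sequence of indices $i_1,i_2,\dots$ of the construction, $\operatorname{rad}(S_{i_1\cdots i_n})\to0$. For each word $I$ set $h_I:=\max_{x\in S_I}\operatorname{dist}(x,C)$. The thickness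 of $C$ associated to the system is $\tau(C,\{S_I\}_I):=\inf_{n\ge0}\inf_{\ell(I)=n}\frac{\min_i\operatorname{rad}(S_{I,i})}{h_I}$. The system $\{S_I\}_I$ is $r$-uniformly dense if for every word $I$ and every ball $B\subseteq S_I$ with $\operatorname{rad}(B)\ge r\operatorname{rad}(S_I)$ there is a child $S_{I,i}\subseteq B$. *)

theory Defs
  imports "HOL-Analysis.Analysis"
begin

text \<open>A norm N on a finite-dimensional real vector space (R^d), inducing dist x y = N (x - y).\<close>
definition is_norm :: "('a::euclidean_space \<Rightarrow> real) \<Rightarrow> bool" where
  "is_norm N \<longleftrightarrow> (\<forall>x y. N (x + y) \<le> N x + N y) \<and> (\<forall>a x. N (a *\<^sub>R x) = \<bar>a\<bar> * N x)
     \<and> (\<forall>x. N x = 0 \<longleftrightarrow> x = 0)"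

text \<open>A closed ball is represented by a pair (center, radius); nball N B is its point set.\<close>
definition nball :: "('a::euclidean_space \<Rightarrow> real) \<Rightarrow> 'a \<times> real \<Rightarrow> 'a set" where
  "nball N B = {x. N (x - fst B) \<le> snd B}"

definition rad :: "'a \<times> real \<Rightarrow> real" where "rad B = snd B"

definition ndist_set :: "('a::euclidean_space \<Rightarrow> real) \<Rightarrow> 'a \<Rightarrow> 'a set \<Rightarrow> real" where
  "ndist_set N x C = Inf ((\<lambda>y. N (x - y)) ` C)"

text \<open>Words: finite sequences of indices; the admissible words of the construction
  with k I children (indexed 1..k I) at each node I. Children of I are I @ [j].\<close>
definition valid_word :: "(nat list \<Rightarrow> nat) \<Rightarrow> nat list \<Rightarrow> bool" where
  "valid_word k I \<longleftrightarrow> (\<forall>n < length I. 1 \<le> I ! n \<and> I ! n \<le> k (take n I))"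

definition valid_seq :: "(nat list \<Rightarrow> nat) \<Rightarrow> (nat \<Rightarrow> nat) \<Rightarrow> bool" where
  "valid_seq k i \<longleftrightarrow> (\<forall>n. 1 \<le> i n \<and> i n \<le> k (map i [0..<n]))"

definition system_of_balls ::
  "('a::euclidean_space \<Rightarrow> real) \<Rightarrow> 'a set \<Rightarrow> (nat list \<Rightarrow> nat) \<Rightarrow> (nat list \<Rightarrow> 'a \<times> real) \<Rightarrow> bool" where
  "system_of_balls N C k S \<longleftrightarrow>
     (\<forall>I. valid_word k I \<longrightarrow> rad (S I) \<ge> 0 \<and> k I \<ge> 1
          \<and> (\<forall>j\<in>{1..k I}. nball N (S (I @ [j])) \<subseteq> nball N (S I)))
   \<and> C = (\<Inter>n. \<Union>I\<in>{I. valid_word k I \<and> length I = n}. nball N (S I))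
   \<and> (\<forall>i. valid_seq k i \<longrightarrow> (\<lambda>n. rad (S (map i [0..<n]))) \<longlonglongrightarrow> 0)"

definition hgt :: "('a::euclidean_space \<Rightarrow> real) \<Rightarrow> 'a set \<Rightarrow> ('a \<times> real) \<Rightarrow> real" where
  "hgt N C B = Sup ((\<lambda>x. ndist_set N x C) ` nball N B)"

definition min_child_rad :: "(nat list \<Rightarrow> nat) \<Rightarrow> (nat list \<Rightarrow> 'a \<times> real) \<Rightarrow> nat list \<Rightarrow> real" where
  "min_child_rad k S I = Min ((\<lambda>j. rad (S (I @ [j]))) ` {1..k I})"

definition thickness ::
  "('a::euclidean_space \<Rightarrow> real) \<Rightarrow> 'a set \<Rightarrow> (nat list \<Rightarrow> nat) \<Rightarrow> (nat list \<Rightarrow> 'a \<times> real) \<Rightarrow> ereal" where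
  "thickness N C k S = (INF I\<in>{I. valid_word k I}.
      (if hgt N C (S I) = 0 then \<infinity> else ereal (min_child_rad k S I / hgt N C (S I))))"

definition uniformly_dense ::
  "('a::euclidean_space \<Rightarrow> real) \<Rightarrow> real \<Rightarrow> (nat list \<Rightarrow> nat) \<Rightarrow> (nat list \<Rightarrow> 'a \<times> real) \<Rightarrow> bool" where
  "uniformly_dense N r k S \<longleftrightarrow>
     (\<forall>I B. valid_word k I \<and> rad B \<ge> 0 \<and> nball N B \<subseteq> nball N (S I) \<and> rad B \<ge> r * rad (S I)
        \<longrightarrow> (\<exists>j\<in>{1..k I}. nball N (S (I @ [j])) \<subseteq> nball N B))"

end

theory Submission
  imports Defs
begin

text \<open>Suppose \<open>C\<^sup>1\<close> and \<open>C\<^sup>2\<close> were disjoint, hence at positive distance \<open>\<delta>\<close>. Call a ball \<open>S\<close> of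
  one system hit if the other Cantor set meets its core \<open>(1 - 2r)S\<close>; by (ii) the root
  \<open>S\<^sup>2\<^sub>\<emptyset>\<close> is hit. Given a hit ball \<open>S\<close> of radius \<open>\<rho>\<close>, take a point \<open>x\<close> of the other set in
  its core and descend in the other system to the first ball \<open>S'\<close> around \<open>x\<close> of radius
  \<open>< r\<rho>\<close>, with parent \<open>B\<close>. The product of thicknesses forces \<open>h(B) \<le> (1 - 2r) rad\<close> of every
  child of \<open>S\<close>, or \<open>h(S) \<le> (1 - 2r) rad\<close> of every child of \<open>B\<close>. In the first case uniform
  density puts a child of \<open>S\<close> into a ball of radius \<open>r\<rho>\<close> inside \<open>S \<inter> B\<close>, and its centre,
  lying in \<open>B\<close>, is close to the other set; in the second case the centre of \<open>S'\<close> lies in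
  \<open>S\<close> and is close to the set of \<open>S\<close>. Either way there is a hit ball of radius \<open>\<le> r\<rho>\<close>.
  But a hit ball contains a point at distance \<open>\<ge> \<delta>\<close> from its own set, so its \<open>h\<close>, and
  by positive thickness its radius, is bounded below.\<close>

definition scale_ball :: "real \<Rightarrow> 'a \<times> real \<Rightarrow> 'a \<times> real" where
  "scale_ball a B = (fst B, a * rad B)"

lemma rad_scale_ball [simp]: "rad (scale_ball a B) = a * rad B"
  by (simp add: scale_ball_def rad_def)

locale norm_fn =
  fixes N :: "'a::euclidean_space \<Rightarrow> real"
  assumes is_norm: "is_norm N"
begin

lemma zero [simp]: "N 0 = 0"
  using is_norm unfolding is_norm_def by auto

lemma scale: "N (a *\<^sub>R x) = \<bar>a\<bar> * N x"
  using is_norm unfolding is_norm_def by auto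

lemma triangle: "N (x + y) \<le> N x + N y"
  using is_norm unfolding is_norm_def by auto

lemma eq_0_iff: "N x = 0 \<longleftrightarrow> x = 0"
  using is_norm unfolding is_norm_def by auto

lemma minus: "N (- x) = N x"
  using scale[of "-1" x] by simp

lemma nonneg: "0 \<le> N x"
  using triangle[of x "- x"] minus[of x] by simp

lemma pos: "x \<noteq> 0 \<Longrightarrow> 0 < N x"
  using nonneg[of x] eq_0_iff[of x] by linarith

lemma commute: "N (x - y) = N (y - x)"
  using minus[of "x - y"] by simp

lemma triangle_diff: "N (x - z) \<le> N (x - y) + N (y - z)"
  using triangle[of "x - y" "y - z"] by simp

lemma sum_le: "N (sum f A) \<le> (\<Sum>a\<in>A. N (f a))"
  by (induction A rule: infinite_finite_induct) (auto intro: order_trans[OF triangle])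

lemma le_mult_norm: "\<exists>M\<ge>0. \<forall>x. N x \<le> M * norm x"
proof (intro exI conjI allI)
  let ?M = "\<Sum>b\<in>Basis. N b"
  show "0 \<le> ?M"
    by (simp add: sum_nonneg nonneg)
  fix x :: 'a
  have "N x = N (\<Sum>b\<in>Basis. (x \<bullet> b) *\<^sub>R b)"
    by (simp add: euclidean_representation)
  also have "\<dots> \<le> (\<Sum>b\<in>Basis. \<bar>x \<bullet> b\<bar> * N b)"
    using sum_le[of "\<lambda>b. (x \<bullet> b) *\<^sub>R b" Basis] by (simp add: scale)
  also have "\<dots> \<le> (\<Sum>b\<in>Basis. norm x * N b)"
    by (intro sum_mono mult_right_mono) (simp_all add: Basis_le_norm nonneg)
  finally show "N x \<le> ?M * norm x"
    by (simp add: sum_distrib_left mult.commute)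
qed

lemma continuous: "continuous_on S N"
proof -
  obtain M where M: "0 \<le> M" "\<And>x. N x \<le> M * norm x"
    using le_mult_norm by blast
  have "dist (N x) (N y) \<le> M * dist x y" for x y
    using triangle_diff[of x 0 y] triangle_diff[of y 0 x] M(2)[of "x - y"]
    by (simp add: dist_real_def dist_norm commute[of _ y] abs_le_iff)
  then have "M-lipschitz_on S N"
    using M(1) by (intro lipschitz_onI)
  then show ?thesis
    by (rule lipschitz_on_continuous_on)
qed

lemma mult_norm_le: "\<exists>m>0. \<forall>x. m * norm x \<le> N x"
proof -
  obtain b :: 'a where "b \<in> Basis"
    using nonempty_Basis by blast
  then have "sphere (0::'a) 1 \<noteq> {}"
    by (auto intro!: exI[of _ b])
  then obtain s where s: "s \<in> sphere 0 1" "\<And>t. t \<in> sphere 0 1 \<Longrightarrow> N s \<le> N t"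
    using continuous_attains_inf[OF compact_sphere _ continuous] by blast
  have "N s * norm x \<le> N x" for x
  proof (cases "x = 0")
    case False
    then have "N s \<le> N ((1 / norm x) *\<^sub>R x)"
      by (intro s(2)) simp
    with False show ?thesis
      by (simp add: scale field_simps)
  qed simp
  moreover have "0 < N s"
    using s(1) by (intro pos) auto
  ultimately show ?thesis
    by blast
qed

lemma compact_nball: "compact (nball N B)"
proof -
  obtain m where m: "0 < m" "\<And>x. m * norm x \<le> N x"
    using mult_norm_le by blast
  have "closed (nball N B)"
    unfolding nball_def
    by (intro closed_Collect_le continuous_on_compose2[OF continuous] continuous_intros) auto
  moreover have "bounded (nball N B)"
    unfolding bounded_iff
  proof (intro exI ballI)
    fix x assume "x \<in> nball N B"
    then have "norm (x - fst B) \<le> snd B / m"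
      using m(2)[of "x - fst B"] m(1) by (simp add: nball_def field_simps)
    then show "norm x \<le> norm (fst B) + snd B / m"
      using norm_triangle_sub[of x "fst B"] by linarith
  qed
  ultimately show ?thesis
    by (simp add: compact_eq_bounded_closed)
qed

lemma center_in_nball: "0 \<le> rad B \<Longrightarrow> fst B \<in> nball N B"
  by (simp add: nball_def rad_def)

text \<open>A ball determines its radius: two antipodal points of \<open>B\<close> lie at distance \<open>2 rad B\<close>.\<close>
lemma rad_le_if_nball_subset:
  assumes sub: "nball N B \<subseteq> nball N B'" and B: "0 \<le> rad B"
  shows "rad B \<le> rad B'"
proof -
  obtain b :: 'a where "b \<in> Basis"
    using nonempty_Basis by blast
  then have "0 < N b"
    by (intro pos) auto
  define v where "v = (1 / N b) *\<^sub>R b"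
  have v: "N v = 1"
    using \<open>0 < N b\<close> by (simp add: v_def scale)
  let ?p = "fst B + rad B *\<^sub>R v" and ?q = "fst B - rad B *\<^sub>R v"
  have "?p \<in> nball N B" "?q \<in> nball N B"
    using B v minus[of "rad B *\<^sub>R v"] by (auto simp: nball_def rad_def scale)
  then have "?p \<in> nball N B'" "?q \<in> nball N B'"
    using sub by blast+
  then have "N (?p - fst B') \<le> rad B'" "N (fst B' - ?q) \<le> rad B'"
    by (auto simp: nball_def rad_def commute[of _ "fst B'"])
  moreover have "2 * rad B = N (?p - ?q)"
    using B v by (simp add: scale flip: scaleR_2)
  moreover have "N (?p - ?q) \<le> N (?p - fst B') + N (fst B' - ?q)"
    by (rule triangle_diff)
  ultimately show ?thesis
    by linarith
qed

lemma ndist_set_le: "z \<in> C \<Longrightarrow> ndist_set N y C \<le> N (y - z)"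
  unfolding ndist_set_def by (rule cInf_lower) (auto intro: bdd_belowI[of _ 0] nonneg)

lemma ndist_set_ge: "C \<noteq> {} \<Longrightarrow> (\<And>z. z \<in> C \<Longrightarrow> d \<le> N (y - z)) \<Longrightarrow> d \<le> ndist_set N y C"
  unfolding ndist_set_def by (rule cInf_greatest) auto

lemma ndist_set_attained:
  assumes "compact C" "C \<noteq> {}"
  obtains z where "z \<in> C" "N (y - z) = ndist_set N y C"
proof -
  have "continuous_on C (\<lambda>z. N (y - z))"
    by (intro continuous_on_compose2[OF continuous] continuous_intros) auto
  then obtain z where z: "z \<in> C" "\<And>w. w \<in> C \<Longrightarrow> N (y - z) \<le> N (y - w)"
    using continuous_attains_inf[OF assms] by blast
  then have "ndist_set N y C = N (y - z)"
    unfolding ndist_set_def by (intro cInf_eq_minimum) auto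
  with z(1) show ?thesis
    by (intro that) auto
qed

lemma ndist_set_le_hgt:
  assumes "C \<noteq> {}" "y \<in> nball N B"
  shows "ndist_set N y C \<le> hgt N C B"
proof -
  obtain z where "z \<in> C"
    using assms(1) by blast
  have "ndist_set N x C \<le> snd B + N (fst B - z)" if "x \<in> nball N B" for x
    using that ndist_set_le[OF \<open>z \<in> C\<close>, of x] triangle_diff[of x z "fst B"]
    by (simp add: nball_def)
  then have "bdd_above ((\<lambda>x. ndist_set N x C) ` nball N B)"
    by (rule bdd_aboveI2)
  with assms(2) show ?thesis
    unfolding hgt_def by (intro cSup_upper) auto
qed

lemma hgt_nonneg: "C \<noteq> {} \<Longrightarrow> 0 \<le> rad B \<Longrightarrow> 0 \<le> hgt N C B"
  using ndist_set_ge[of C 0] nonneg ndist_set_le_hgt center_in_nball by (meson order_trans)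

lemma nball_meets_if_hgt_le:
  assumes "compact C" "C \<noteq> {}" "fst B' \<in> nball N B" "hgt N C B \<le> rad B'"
  shows "C \<inter> nball N B' \<noteq> {}"
proof -
  obtain z where "z \<in> C" "N (fst B' - z) = ndist_set N (fst B') C"
    using ndist_set_attained[OF assms(1,2)] .
  moreover have "ndist_set N (fst B') C \<le> rad B'"
    using ndist_set_le_hgt[OF assms(2,3)] assms(4) by linarith
  ultimately show ?thesis
    by (auto simp: nball_def rad_def commute[of z])
qed

lemma nball_through_point_inside:
  assumes x: "N (x - a) \<le> \<alpha>" and \<epsilon>: "0 \<le> \<epsilon>" "\<epsilon> \<le> \<alpha>"
  obtains q where "N (q - x) \<le> \<epsilon>" "nball N (q, \<epsilon>) \<subseteq> nball N (a, \<alpha>)"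
proof -
  obtain q where q: "N (q - x) \<le> \<epsilon>" "N (q - a) \<le> \<alpha> - \<epsilon>"
  proof (cases "N (a - x) \<le> \<epsilon>")
    case True
    with \<epsilon> show ?thesis
      by (intro that[of a]) auto
  next
    case False
    define t where "t = \<epsilon> / N (a - x)"
    have t: "0 \<le> t" "t \<le> 1" "t * N (a - x) = \<epsilon>"
      using False \<epsilon> by (auto simp: t_def field_simps)
    define q where "q = x + t *\<^sub>R (a - x)"
    have "q - a = (1 - t) *\<^sub>R (x - a)"
      by (simp add: q_def algebra_simps)
    then have "N (q - a) = (1 - t) * N (x - a)"
      using t by (simp add: scale)
    also have "\<dots> = N (x - a) - \<epsilon>"
      using t commute[of a x] by (simp add: algebra_simps)
    moreover have "N (q - x) = \<epsilon>"
      using t by (simp add: q_def scale)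
    ultimately show ?thesis
      using x by (intro that[of q]) auto
  qed
  have "nball N (q, \<epsilon>) \<subseteq> nball N (a, \<alpha>)"
  proof
    fix y assume "y \<in> nball N (q, \<epsilon>)"
    then show "y \<in> nball N (a, \<alpha>)"
      using q(2) triangle_diff[of y a q] by (simp add: nball_def)
  qed
  with q(1) show ?thesis
    using that by blast
qed

lemma separated_compact:
  assumes "compact A" "compact B" "A \<inter> B = {}"
  obtains \<delta> where "0 < \<delta>" "\<And>p q. p \<in> A \<Longrightarrow> q \<in> B \<Longrightarrow> \<delta> \<le> N (p - q)"
proof -
  obtain d where d: "0 < d" "\<And>p q. p \<in> A \<Longrightarrow> q \<in> B \<Longrightarrow> d \<le> dist p q"
    using separate_compact_closed[OF assms(1) compact_imp_closed[OF assms(2)] assms(3)] by blast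
  obtain m where m: "0 < m" "\<And>x. m * norm x \<le> N x"
    using mult_norm_le by blast
  have "m * d \<le> N (p - q)" if "p \<in> A" "q \<in> B" for p q
  proof -
    have "m * d \<le> m * norm (p - q)"
      using d(2)[OF that] m(1) by (simp add: dist_norm)
    with m(2)[of "p - q"] show ?thesis
      by linarith
  qed
  with d(1) m(1) show ?thesis
    using that[of "m * d"] by simp
qed

end

lemma valid_word_Nil [simp]: "valid_word k []"
  by (simp add: valid_word_def)

lemma valid_word_snoc: "valid_word k (J @ [j]) \<longleftrightarrow> valid_word k J \<and> j \<in> {1..k J}"
  unfolding valid_word_def by (auto simp: nth_append less_Suc_eq)

lemma valid_word_take: "valid_word k J \<Longrightarrow> valid_word k (take n J)"
  unfolding valid_word_def by (auto simp: min_def)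

lemma valid_seq_iff_valid_word: "valid_seq k i \<longleftrightarrow> (\<forall>n. valid_word k (map i [0..<n]))"
proof
  show "valid_seq k i \<Longrightarrow> \<forall>n. valid_word k (map i [0..<n])"
    unfolding valid_seq_def valid_word_def by (auto simp: take_map)
  assume "\<forall>n. valid_word k (map i [0..<n])"
  then have "valid_word k (map i [0..<n] @ [i n])" for n
    by (metis map_append list.map upt_Suc_append zero_le)
  then show "valid_seq k i"
    unfolding valid_seq_def by (simp add: valid_word_snoc)
qed

definition extendable :: "nat list set \<Rightarrow> nat list \<Rightarrow> bool" where
  "extendable T J \<longleftrightarrow> (\<forall>n. \<exists>J'\<in>T. length J' = length J + n \<and> take (length J) J' = J)"

lemma extendable_snoc:
  assumes prefix_closed: "\<And>J n. J \<in> T \<Longrightarrow> take n J \<in> T"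
    and finite_branching: "finite {j. J @ [j] \<in> T}"
    and "extendable T J"
  obtains j where "extendable T (J @ [j])"
proof -
  have "\<forall>n. \<exists>J'. J' \<in> T \<and> length J' = length J + Suc n \<and> take (length J) J' = J"
    using \<open>extendable T J\<close> unfolding extendable_def by blast
  from choice[OF this] obtain F where F: "\<And>n. F n \<in> T" "\<And>n. length (F n) = length J + Suc n"
      "\<And>n. take (length J) (F n) = J"
    by blast
  define g where "g n = F n ! length J" for n
  have take_F: "take (Suc (length J)) (F n) = J @ [g n]" for n
    using F(2,3)[of n] by (simp add: g_def take_Suc_conv_app_nth)
  have "J @ [g n] \<in> T" for n
    using prefix_closed[OF F(1)[of n], of "Suc (length J)"] take_F[of n] by simp
  then have "finite (range g)"
    by (intro finite_subset[OF _ finite_branching]) auto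
  then obtain n0 where "infinite {n. g n = g n0}"
    using pigeonhole_infinite[of UNIV g] by auto
  then have many: "\<exists>n\<ge>m. g n = g n0" for m
    by (simp add: infinite_nat_iff_unbounded_le)
  have "extendable T (J @ [g n0])"
    unfolding extendable_def
  proof
    fix m
    obtain n where "m \<le> n" "g n = g n0"
      using many by blast
    let ?J' = "take (Suc (length J) + m) (F n)"
    have "take (Suc (length J)) ?J' = J @ [g n0]"
      using take_F[of n] \<open>g n = g n0\<close> by (simp add: min_def)
    moreover have "length ?J' = Suc (length J) + m"
      using F(2)[of n] \<open>m \<le> n\<close> by simp
    ultimately show "\<exists>J'\<in>T. length J' = length (J @ [g n0]) + m \<and> take (length (J @ [g n0])) J' = J @ [g n0]"
      using prefix_closed[OF F(1)[of n], of "Suc (length J) + m"] by (intro bexI[of _ ?J']) auto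
  qed
  then show ?thesis ..
qed

lemma koenig:
  fixes T :: "nat list set"
  assumes prefix_closed: "\<And>J n. J \<in> T \<Longrightarrow> take n J \<in> T"
    and finite_branching: "\<And>J. finite {j. J @ [j] \<in> T}"
    and unbounded: "\<And>n. \<exists>J\<in>T. length J = n"
  obtains i where "\<And>n. map i [0..<n] \<in> T"
proof -
  define next_word where "next_word J = J @ [SOME j. extendable T (J @ [j])]" for J
  define w where "w n = (next_word ^^ n) []" for n
  have w_Suc: "w (Suc n) = next_word (w n)" for n
    by (simp add: w_def)
  have "extendable T []"
    using unbounded unfolding extendable_def by simp
  then have w: "extendable T (w n) \<and> length (w n) = n" for n
  proof (induction n)
    case (Suc n)
    then obtain j where "extendable T (w n @ [j])"
      using extendable_snoc[OF prefix_closed finite_branching] by blast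
    then have "extendable T (next_word (w n))"
      unfolding next_word_def by (rule someI)
    with Suc show ?case
      by (simp add: w_Suc next_word_def)
  qed (simp add: w_def)
  define i where "i n = w (Suc n) ! n" for n
  have "w (Suc n) = w n @ [i n]" for n
    using w[of n] by (simp add: i_def w_Suc next_word_def nth_append)
  then have map_i: "map i [0..<n] = w n" for n
    by (induction n) (simp add: w_def, simp)
  have w_in: "w n \<in> T" for n
  proof -
    obtain J' where "J' \<in> T" "length J' = length (w n)" "take (length (w n)) J' = w n"
      using w[of n] unfolding extendable_def by (metis add_0_right)
    then show ?thesis
      by simp
  qed
  show ?thesis
  proof (rule that)
    show "map i [0..<n] \<in> T" for n
      using map_i w_in by simp
  qed
qed

locale ball_system = norm_fn N
  for N :: "'a::euclidean_space \<Rightarrow> real" +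
  fixes C :: "'a set" and k :: "nat list \<Rightarrow> nat" and S :: "nat list \<Rightarrow> 'a \<times> real"
  assumes system: "system_of_balls N C k S"
begin

lemma rad_nonneg: "valid_word k I \<Longrightarrow> 0 \<le> rad (S I)"
  using system unfolding system_of_balls_def by blast

lemma has_children: "valid_word k I \<Longrightarrow> 1 \<le> k I"
  using system unfolding system_of_balls_def by blast

lemma nball_child_subset: "valid_word k I \<Longrightarrow> j \<in> {1..k I} \<Longrightarrow> nball N (S (I @ [j])) \<subseteq> nball N (S I)"
  using system unfolding system_of_balls_def by blast

lemma C_eq: "C = (\<Inter>n. \<Union>I\<in>{I. valid_word k I \<and> length I = n}. nball N (S I))"
  using system unfolding system_of_balls_def by blast

lemma rad_tendsto_0: "valid_seq k i \<Longrightarrow> (\<lambda>n. rad (S (map i [0..<n]))) \<longlonglongrightarrow> 0"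
  using system unfolding system_of_balls_def by blast

lemma nball_subset_take: "valid_word k J \<Longrightarrow> nball N (S J) \<subseteq> nball N (S (take n J))"
proof (induction J rule: rev_induct)
  case (snoc j J)
  then have "valid_word k J" "j \<in> {1..k J}"
    by (simp_all add: valid_word_snoc)
  then show ?case
    using snoc.IH nball_child_subset by (cases "n \<le> length J") auto
qed simp

lemma rad_le_root: "valid_word k J \<Longrightarrow> rad (S J) \<le> rad (S [])"
  using rad_le_if_nball_subset[OF nball_subset_take[of J 0]] rad_nonneg by simp

lemma nonempty: "C \<noteq> {}"
proof -
  define w :: "nat \<Rightarrow> nat list" where "w n = replicate n 1" for n
  have valid: "valid_word k (w n)" for n
  proof (induction n)
    case (Suc n)
    then show ?case
      using has_children[OF Suc] by (simp add: w_def valid_word_snoc flip: replicate_append_same)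
  qed (simp add: w_def)
  have "\<Inter>(range (\<lambda>n. nball N (S (w n)))) \<noteq> {}"
  proof (rule compact_nest)
    show "nball N (S (w n)) \<noteq> {}" for n
      using center_in_nball[OF rad_nonneg[OF valid]] by blast
    show "m \<le> n \<Longrightarrow> nball N (S (w n)) \<subseteq> nball N (S (w m))" for m n
      using nball_subset_take[OF valid, of n m] by (simp add: w_def)
  qed (rule compact_nball)
  moreover have "x \<in> C" if x: "\<And>n. x \<in> nball N (S (w n))" for x
  proof -
    have "w n \<in> {I. valid_word k I \<and> length I = n}" for n
      using valid by (simp add: w_def)
    with x show ?thesis
      by (subst C_eq) blast
  qed
  ultimately show ?thesis
    by blast
qed

lemma small_ball_at:
  assumes "x \<in> C" "0 < \<epsilon>"
  obtains J where "valid_word k J" "x \<in> nball N (S J)" "rad (S J) < \<epsilon>"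
proof -
  define T where "T = {J. valid_word k J \<and> x \<in> nball N (S J)}"
  have "take n J \<in> T" if "J \<in> T" for J n
    using that nball_subset_take valid_word_take by (auto simp: T_def)
  moreover have "finite {j. J @ [j] \<in> T}" for J
    by (rule finite_subset[of _ "{1..k J}"]) (auto simp: T_def valid_word_snoc)
  moreover have "\<exists>J\<in>T. length J = n" for n
    using \<open>x \<in> C\<close> by (subst (asm) C_eq) (auto simp: T_def)
  ultimately obtain i where i: "\<And>n. map i [0..<n] \<in> T"
    using koenig by blast
  then have "valid_seq k i"
    by (simp add: valid_seq_iff_valid_word T_def)
  then obtain n where "rad (S (map i [0..<n])) < \<epsilon>"
    using order_tendstoD(2)[OF rad_tendsto_0 \<open>0 < \<epsilon>\<close>] by (auto simp: eventually_sequentially)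
  with i show ?thesis
    by (intro that) (auto simp: T_def)
qed

lemma crossing_child:
  assumes "x \<in> C" "0 < \<epsilon>" "\<epsilon> \<le> rad (S [])"
  obtains I j where "valid_word k I" "j \<in> {1..k I}" "x \<in> nball N (S (I @ [j]))"
    "\<epsilon> \<le> rad (S I)" "rad (S (I @ [j])) < \<epsilon>"
proof -
  obtain J where J: "valid_word k J" "x \<in> nball N (S J)" "rad (S J) < \<epsilon>"
    using small_ball_at[OF assms(1,2)] .
  have "\<exists>I j. valid_word k I \<and> j \<in> {1..k I} \<and> x \<in> nball N (S (I @ [j]))
      \<and> \<epsilon> \<le> rad (S I) \<and> rad (S (I @ [j])) < \<epsilon>"
    if "valid_word k J" "x \<in> nball N (S J)" "rad (S J) < \<epsilon>" for J
    using that
  proof (induction J rule: rev_induct)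
    case (snoc j J)
    then have "valid_word k J" "j \<in> {1..k J}" "x \<in> nball N (S J)"
      using nball_child_subset by (auto simp: valid_word_snoc)
    show ?case
    proof (cases "rad (S J) < \<epsilon>")
      case True
      with snoc.IH \<open>valid_word k J\<close> \<open>x \<in> nball N (S J)\<close> show ?thesis
        by blast
    next
      case False
      with snoc.prems \<open>valid_word k J\<close> \<open>j \<in> {1..k J}\<close> show ?thesis
        by (intro exI[of _ J] exI[of _ j]) auto
    qed
  qed (use assms(3) in simp)
  with J that show ?thesis
    by blast
qed

lemma min_child_rad_le: "j \<in> {1..k I} \<Longrightarrow> min_child_rad k S I \<le> rad (S (I @ [j]))"
  unfolding min_child_rad_def by (intro Min_le) auto

lemma min_child_rad_nonneg: "valid_word k I \<Longrightarrow> 0 \<le> min_child_rad k S I"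
  unfolding min_child_rad_def using has_children rad_nonneg
  by (subst Min_ge_iff) (auto simp: valid_word_snoc)

lemma min_child_rad_le_rad: "valid_word k I \<Longrightarrow> min_child_rad k S I \<le> rad (S I)"
  using min_child_rad_le[of 1 I] has_children[of I] rad_nonneg[of "I @ [1]"]
    rad_le_if_nball_subset[OF nball_child_subset[of I 1]]
  by (force simp: valid_word_snoc)

lemma hgt_word_nonneg: "valid_word k I \<Longrightarrow> 0 \<le> hgt N C (S I)"
  using hgt_nonneg[OF nonempty rad_nonneg] .

lemma thickness_le: "valid_word k I \<Longrightarrow> hgt N C (S I) \<noteq> 0 \<Longrightarrow>
    thickness N C k S \<le> ereal (min_child_rad k S I / hgt N C (S I))"
  unfolding thickness_def by (intro INF_lower2[of I]) auto

lemma thickness_nonneg: "0 \<le> thickness N C k S"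
  unfolding thickness_def
  using hgt_word_nonneg min_child_rad_nonneg by (intro INF_greatest) auto

lemma thickness_pos_bound:
  assumes "thickness N C k S \<noteq> 0"
  obtains t where "0 < t" "\<And>I. valid_word k I \<Longrightarrow> t * hgt N C (S I) \<le> min_child_rad k S I"
proof -
  obtain t where t: "0 < t" "ereal t \<le> thickness N C k S"
  proof (cases "thickness N C k S")
    case (real t)
    with assms thickness_nonneg show ?thesis
      by (intro that[of t]) auto
  next
    case PInf
    then show ?thesis
      by (intro that[of 1]) auto
  qed (use thickness_nonneg in simp)
  have "t * hgt N C (S I) \<le> min_child_rad k S I" if I: "valid_word k I" for I
  proof (cases "hgt N C (S I) = 0")
    case False
    then have "0 < hgt N C (S I)"
      using hgt_word_nonneg[OF I] by linarith
    moreover have "t \<le> min_child_rad k S I / hgt N C (S I)"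
      using order_trans[OF t(2) thickness_le[OF I False]] by simp
    ultimately show ?thesis
      by (simp add: field_simps)
  qed (simp add: min_child_rad_nonneg I)
  with t(1) show ?thesis
    using that by blast
qed

end

lemma thickness_dichotomy:
  fixes T1 T2 :: ereal and c h1 h2 m1 m2 :: real
  assumes prod: "ereal (1 / c^2) \<le> T1 * T2" and c: "0 < c" and T: "0 \<le> T1" "0 \<le> T2"
    and nonneg: "0 \<le> h1" "0 \<le> h2" "0 \<le> m1" "0 \<le> m2"
    and T1: "h1 \<noteq> 0 \<Longrightarrow> T1 \<le> ereal (m1 / h1)" and T2: "h2 \<noteq> 0 \<Longrightarrow> T2 \<le> ereal (m2 / h2)"
  shows "h1 \<le> c * m2 \<or> h2 \<le> c * m1"
proof (rule ccontr)
  assume "\<not> ?thesis"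
  then have lt: "c * m2 < h1" "c * m1 < h2"
    by auto
  moreover have "0 \<le> c * m2" "0 \<le> c * m1"
    using c nonneg by simp_all
  ultimately have h: "0 < h1" "0 < h2"
    by linarith+
  have "T1 * T2 \<le> ereal (m1 / h1) * ereal (m2 / h2)"
    using h nonneg by (intro ereal_mult_mono' T T1 T2) auto
  with prod have "ereal (1 / c^2) \<le> ereal (m1 / h1) * ereal (m2 / h2)"
    by (rule order_trans)
  then have "h1 * h2 \<le> c^2 * (m1 * m2)"
    using h c by (simp add: field_simps)
  moreover have "(c * m2) * (c * m1) < h1 * h2"
    using lt c nonneg h by (intro mult_strict_mono) auto
  ultimately show False
    by (simp add: power2_eq_square algebra_simps)
qed

locale thick_pair =
  norm_fn N + X: ball_system N CX kX SX + Y: ball_system N CY kY SY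
  for N :: "'a::euclidean_space \<Rightarrow> real" and CX kX SX CY kY SY +
  fixes r :: real
  assumes r: "0 < r" "r < 1/2"
    and compact: "compact CX" "compact CY"
    and dense: "uniformly_dense N r kX SX" "uniformly_dense N r kY SY"
    and thick: "ereal (1 / (1 - 2*r)^2) \<le> thickness N CX kX SX * thickness N CY kY SY"

sublocale thick_pair \<subseteq> swap: thick_pair N CY kY SY CX kX SX r
  using r compact dense thick by unfold_locales (simp_all add: mult.commute)

context thick_pair
begin

lemma gap_dichotomy:
  assumes "valid_word kX L" "valid_word kY I"
  shows "hgt N CX (SX L) \<le> (1 - 2*r) * min_child_rad kY SY I
    \<or> hgt N CY (SY I) \<le> (1 - 2*r) * min_child_rad kX SX L"
  using r assms
  by (intro thickness_dichotomy[OF thick] X.thickness_nonneg Y.thickness_nonneg X.hgt_word_nonneg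
      Y.hgt_word_nonneg X.min_child_rad_nonneg Y.min_child_rad_nonneg X.thickness_le Y.thickness_le) auto

text \<open>The invariant of the descent. The bound by the root of \<open>Y\<close> guarantees that \<open>Y\<close> still
  has balls of radius \<open>\<ge> r rad (SX L)\<close>.\<close>
definition core_hit :: "real \<Rightarrow> bool" where
  "core_hit \<rho> \<longleftrightarrow> (\<exists>L. valid_word kX L \<and> CY \<inter> nball N (scale_ball (1 - 2*r) (SX L)) \<noteq> {}
      \<and> rad (SX L) \<le> \<rho> \<and> r * rad (SX L) \<le> rad (SY []))"

lemma r_mult_le: "0 \<le> x \<Longrightarrow> r * x \<le> x"
  using r by (intro mult_left_le_one_le) auto

lemma core_hit_mono: "core_hit \<rho> \<Longrightarrow> \<rho> \<le> \<rho>' \<Longrightarrow> core_hit \<rho>'"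
  unfolding core_hit_def by force

lemma core_hitI:
  assumes "valid_word kX L" "CY \<inter> nball N (scale_ball (1 - 2*r) (SX L)) \<noteq> {}"
    "rad (SX L) \<le> \<rho>" "\<rho> \<le> rad (SY [])"
  shows "core_hit \<rho>"
  using assms r_mult_le[OF X.rad_nonneg[OF assms(1)]] unfolding core_hit_def by force

end

(* Re-entering the context makes what was declared before visible through the interpretation swap. *)
context thick_pair
begin

lemma descend_in_X:
  assumes L: "valid_word kX L" "x \<in> nball N (scale_ball (1 - 2*r) (SX L))"
    and I: "x \<in> nball N (SY I)" "r * rad (SX L) \<le> rad (SY I)"
    and hgt: "hgt N CY (SY I) \<le> (1 - 2*r) * min_child_rad kX SX L"
  obtains L' where "valid_word kX L'" "CY \<inter> nball N (scale_ball (1 - 2*r) (SX L')) \<noteq> {}"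
    "rad (SX L') \<le> r * rad (SX L)"
proof -
  let ?\<epsilon> = "r * rad (SX L)"
  have \<epsilon>: "0 \<le> ?\<epsilon>"
    using r X.rad_nonneg[OF L(1)] by simp
  have "N (x - fst (SY I)) \<le> rad (SY I)"
    using I(1) by (simp add: nball_def rad_def)
  then obtain q where q: "N (q - x) \<le> ?\<epsilon>" and D_Y: "nball N (q, ?\<epsilon>) \<subseteq> nball N (SY I)"
    using nball_through_point_inside[OF _ \<epsilon> I(2)] by (metis rad_def prod.collapse)
  have "nball N (q, ?\<epsilon>) \<subseteq> nball N (SX L)"
  proof
    fix y assume "y \<in> nball N (q, ?\<epsilon>)"
    then have "N (y - fst (SX L)) \<le> ?\<epsilon> + ?\<epsilon> + (1 - 2*r) * rad (SX L)"
      using q L(2) triangle_diff[of y "fst (SX L)" q] triangle_diff[of q "fst (SX L)" x]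
      by (simp add: nball_def scale_ball_def rad_def)
    then show "y \<in> nball N (SX L)"
      by (simp add: nball_def rad_def algebra_simps)
  qed
  then obtain j where j: "j \<in> {1..kX L}" and child: "nball N (SX (L @ [j])) \<subseteq> nball N (q, ?\<epsilon>)"
    using dense(1)[unfolded uniformly_dense_def, rule_format, of L "(q, ?\<epsilon>)"] L(1) \<epsilon>
    by (auto simp: rad_def)
  let ?L' = "L @ [j]"
  have L': "valid_word kX ?L'"
    using L(1) j by (simp add: valid_word_snoc)
  have "fst (SX ?L') \<in> nball N (SY I)"
    using center_in_nball[OF X.rad_nonneg[OF L']] child D_Y by blast
  moreover have "hgt N CY (SY I) \<le> rad (scale_ball (1 - 2*r) (SX ?L'))"
  proof -
    have "(1 - 2*r) * min_child_rad kX SX L \<le> (1 - 2*r) * rad (SX ?L')"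
      using r by (intro mult_left_mono X.min_child_rad_le[OF j]) auto
    with hgt show ?thesis
      by simp
  qed
  ultimately have "CY \<inter> nball N (scale_ball (1 - 2*r) (SX ?L')) \<noteq> {}"
    using compact(2) Y.nonempty by (intro nball_meets_if_hgt_le) (auto simp: scale_ball_def)
  moreover have "rad (SX ?L') \<le> ?\<epsilon>"
    using rad_le_if_nball_subset[OF child X.rad_nonneg[OF L']] by (simp add: rad_def)
  ultimately show ?thesis
    using L' that by blast
qed

lemma descend_in_Y:
  assumes L: "valid_word kX L" "x \<in> nball N (scale_ball (1 - 2*r) (SX L))"
    and j: "j \<in> {1..kY I}" "x \<in> nball N (SY (I @ [j]))" "rad (SY (I @ [j])) < r * rad (SX L)"
    and hgt: "hgt N CX (SX L) \<le> (1 - 2*r) * min_child_rad kY SY I"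
  shows "CX \<inter> nball N (scale_ball (1 - 2*r) (SY (I @ [j]))) \<noteq> {}"
proof (rule nball_meets_if_hgt_le[OF compact(1) X.nonempty])
  have "N (fst (SY (I @ [j])) - fst (SX L)) \<le> r * rad (SX L) + (1 - 2*r) * rad (SX L)"
    using L(2) j(2,3) triangle_diff[of "fst (SY (I @ [j]))" "fst (SX L)" x] commute[of x]
    by (simp add: nball_def scale_ball_def rad_def)
  also have "\<dots> \<le> rad (SX L)"
    using r X.rad_nonneg[OF L(1)] by (simp add: algebra_simps)
  finally show "fst (scale_ball (1 - 2*r) (SY (I @ [j]))) \<in> nball N (SX L)"
    by (simp add: nball_def scale_ball_def rad_def)
  have "(1 - 2*r) * min_child_rad kY SY I \<le> (1 - 2*r) * rad (SY (I @ [j]))"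
    using r by (intro mult_left_mono Y.min_child_rad_le[OF j(1)]) auto
  with hgt show "hgt N CX (SX L) \<le> rad (scale_ball (1 - 2*r) (SY (I @ [j])))"
    by simp
qed

lemma core_hit_step:
  assumes "core_hit \<rho>" and pos: "\<And>\<rho>'. core_hit \<rho>' \<Longrightarrow> 0 < \<rho>'"
  shows "core_hit (r * \<rho>) \<or> swap.core_hit (r * \<rho>)"
proof -
  obtain L x where L: "valid_word kX L" "x \<in> CY" "x \<in> nball N (scale_ball (1 - 2*r) (SX L))"
      "rad (SX L) \<le> \<rho>" and root: "r * rad (SX L) \<le> rad (SY [])"
    using assms(1) unfolding core_hit_def by blast
  have "core_hit (rad (SX L))"
    using L root unfolding core_hit_def by blast
  then have "0 < r * rad (SX L)"
    using pos r by simp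
  then obtain I j where I: "valid_word kY I" "j \<in> {1..kY I}" "x \<in> nball N (SY (I @ [j]))"
      "r * rad (SX L) \<le> rad (SY I)" "rad (SY (I @ [j])) < r * rad (SX L)"
    using Y.crossing_child[OF L(2) _ root] by blast
  have "r * rad (SX L) \<le> r * \<rho>"
    using L(4) r by simp
  from gap_dichotomy[OF L(1) I(1)]
  have "core_hit (r * rad (SX L)) \<or> swap.core_hit (r * rad (SX L))"
  proof
    assume "hgt N CX (SX L) \<le> (1 - 2*r) * min_child_rad kY SY I"
    then have "CX \<inter> nball N (scale_ball (1 - 2*r) (SY (I @ [j]))) \<noteq> {}"
      by (rule descend_in_Y[OF L(1,3) I(2,3,5)])
    moreover have "r * rad (SX L) \<le> rad (SX [])"
      using r_mult_le[OF X.rad_nonneg[OF L(1)]] X.rad_le_root[OF L(1)] by linarith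
    moreover have "valid_word kY (I @ [j])"
      using I(1,2) by (simp add: valid_word_snoc)
    ultimately have "swap.core_hit (r * rad (SX L))"
      using I(5) by (intro swap.core_hitI) auto
    then show ?thesis ..
  next
    assume "hgt N CY (SY I) \<le> (1 - 2*r) * min_child_rad kX SX L"
    moreover have "x \<in> nball N (SY I)"
      using I(2,3) Y.nball_child_subset[OF I(1)] by blast
    ultimately show ?thesis
      using descend_in_X[OF L(1,3) _ I(4)] root by (metis core_hitI)
  qed
  with \<open>r * rad (SX L) \<le> r * \<rho>\<close> show ?thesis
    using core_hit_mono swap.core_hit_mono by blast
qed

lemma core_hit_lower_bound:
  assumes "CX \<inter> CY = {}"
  obtains \<eta> where "0 < \<eta>" "\<And>\<rho>. core_hit \<rho> \<Longrightarrow> \<eta> \<le> \<rho>"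
proof -
  have "thickness N CX kX SX \<noteq> 0"
  proof
    assume "thickness N CX kX SX = 0"
    with thick have "ereal (1 / (1 - 2*r)^2) \<le> 0"
      by simp
    with r show False
      by simp
  qed
  then obtain t where t: "0 < t" "\<And>L. valid_word kX L \<Longrightarrow> t * hgt N CX (SX L) \<le> min_child_rad kX SX L"
    using X.thickness_pos_bound by blast
  obtain \<delta> where \<delta>: "0 < \<delta>" "\<And>p q. p \<in> CY \<Longrightarrow> q \<in> CX \<Longrightarrow> \<delta> \<le> N (p - q)"
    using separated_compact[OF compact(2,1)] assms by blast
  have "t * \<delta> \<le> \<rho>" if hit: "core_hit \<rho>" for \<rho>
  proof -
    obtain L x where L: "valid_word kX L" "x \<in> CY" "x \<in> nball N (scale_ball (1 - 2*r) (SX L))"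
        "rad (SX L) \<le> \<rho>"
      using hit unfolding core_hit_def by blast
    have "x \<in> nball N (SX L)"
      using L(3) r mult_left_le_one_le[OF X.rad_nonneg[OF L(1)], of "1 - 2*r"]
      by (simp add: nball_def scale_ball_def rad_def)
    moreover have "\<delta> \<le> ndist_set N x CX"
      using \<delta>(2)[OF L(2)] by (intro ndist_set_ge[OF X.nonempty])
    ultimately have "\<delta> \<le> hgt N CX (SX L)"
      using ndist_set_le_hgt[OF X.nonempty] by fastforce
    then have "t * \<delta> \<le> t * hgt N CX (SX L)"
      using t(1) by simp
    also have "\<dots> \<le> rad (SX L)"
      using t(2)[OF L(1)] X.min_child_rad_le_rad[OF L(1)] by linarith
    finally show ?thesis
      using L(4) by linarith
  qed
  with t(1) \<delta>(1) show ?thesis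
    using that[of "t * \<delta>"] by simp
qed

end

context thick_pair
begin

lemma core_hit_imp_meets:
  assumes "core_hit \<rho>"
  shows "CX \<inter> CY \<noteq> {}"
proof
  assume disjoint: "CX \<inter> CY = {}"
  obtain \<eta> where \<eta>: "0 < \<eta>" "\<And>\<rho>. core_hit \<rho> \<Longrightarrow> \<eta> \<le> \<rho>"
    using core_hit_lower_bound[OF disjoint] by blast
  obtain \<eta>' where \<eta>': "0 < \<eta>'" "\<And>\<rho>. swap.core_hit \<rho> \<Longrightarrow> \<eta>' \<le> \<rho>"
    using swap.core_hit_lower_bound disjoint by blast
  have pos: "\<And>\<rho>. core_hit \<rho> \<Longrightarrow> 0 < \<rho>" and pos': "\<And>\<rho>. swap.core_hit \<rho> \<Longrightarrow> 0 < \<rho>"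
    using \<eta> \<eta>' by (meson less_le_trans)+
  have hit: "core_hit (r^n * \<rho>) \<or> swap.core_hit (r^n * \<rho>)" for n
  proof (induction n)
    case (Suc n)
    then show ?case
      using core_hit_step[OF _ pos] swap.core_hit_step[OF _ pos'] by (auto simp: mult.assoc)
  qed (use assms in simp)
  have "(\<lambda>n. r^n * \<rho>) \<longlonglongrightarrow> 0"
    using r by (intro tendsto_mult_left_zero LIMSEQ_power_zero) auto
  then obtain n where "r^n * \<rho> < min \<eta> \<eta>'"
    using order_tendstoD(2)[of _ 0 sequentially "min \<eta> \<eta>'"] \<eta>(1) \<eta>'(1)
    by (auto simp: eventually_sequentially)
  then have "r^n * \<rho> < \<eta>" "r^n * \<rho> < \<eta>'"
    by simp_all
  with hit[of n] \<eta>(2) \<eta>'(2) show False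
    by (meson not_le)
qed

end

theorem theorem1p1:
  fixes N :: "'a::euclidean_space \<Rightarrow> real"
    and C1 C2 :: "'a set"
    and k1 k2 :: "nat list \<Rightarrow> nat"
    and S1 S2 :: "nat list \<Rightarrow> 'a \<times> real"
    and r :: real
  assumes "is_norm N"
    and "compact C1" and "compact C2"
    and "system_of_balls N C1 k1 S1" and "system_of_balls N C2 k2 S2"
    and "0 < r" and "r < 1/2"
    and "thickness N C1 k1 S1 * thickness N C2 k2 S2 \<ge> ereal (1 / (1 - 2*r)^2)"
    and "C1 \<inter> nball N (fst (S2 []), (1 - 2*r) * rad (S2 [])) \<noteq> {}"
    and "rad (S1 []) \<ge> r * rad (S2 [])" and "rad (S2 []) \<ge> r * rad (S1 [])"
    and "uniformly_dense N r k1 S1" and "uniformly_dense N r k2 S2"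
  shows "C1 \<inter> C2 \<noteq> {}"
proof -
  interpret thick_pair N C1 k1 S1 C2 k2 S2 r
    using assms by unfold_locales auto
  have "swap.core_hit (rad (S2 []))"
    using assms(9,10) unfolding swap.core_hit_def
    by (intro exI[of _ "[]"]) (simp add: scale_ball_def)
  then show ?thesis
    using swap.core_hit_imp_meets by blast
qed

end
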